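(* Let $G$ be a connected graph and let $G_\pi$ be a signed graph with underlying graph $G$ that is not balanced. Then there exists a spanning proper subgraph $H$ of $G$ (i.e. $V(H)=V(G)$ and $E(H)\subsetneq E(G)$) such that $\lambda_1(G_\pi)<\rho(H)$.
   Context: All graphs are finite, simple and undirected. A signed graph $G_\pi$ is a pair $(G,\pi)$ with $G=(V,E)$ a graph and $\pi:E\to\{+1,-1\}$. Its adjacency matrix $A(G_\pi)=(A_{ij})$ is the symmetric matrix with $A_{ij}=\pi(\{i,j\})$ if $\{i,j\}\in E$ and $A_{ij}=0$ otherwise; its eigenvalues $\lambda_1(G_\pi)\ge\cdots\ge\lambda_n(G_\pi)$ are those of $A(G_\pi)$. Two signed graphs $G_\pi,G_{\pi'}$ on the same graph are switching equivalent if $A(G_{\pi'})=D^{-1}A(G_\pi)D$ for some diagonal matrix $D$ with diagonal entries $\pm1$. $G_+$ denotes the signing with all signs $+1$. $G_\pi$ is balanced if it is switching equivalent to $G_+$. $\rho(H)$ denotes the spectral radius (largest modulus of an eigenvalue) of the adjacency matrix of a graph $H$. *)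

theory Defs
  imports "HOL-Analysis.Analysis"
begin

text \<open>A finite simple graph: vertex set = the finite type 'n, edges given by a
  symmetric irreflexive relation.\<close>
definition simple_graph :: "('n::finite \<Rightarrow> 'n \<Rightarrow> bool) \<Rightarrow> bool" where
  "simple_graph E \<longleftrightarrow> symp E \<and> irreflp E"

definition connected_graph :: "('n::finite \<Rightarrow> 'n \<Rightarrow> bool) \<Rightarrow> bool" where
  "connected_graph E \<longleftrightarrow> (\<forall>u v. E\<^sup>*\<^sup>* u v)"

definition signing :: "('n::finite \<Rightarrow> 'n \<Rightarrow> bool) \<Rightarrow> ('n \<Rightarrow> 'n \<Rightarrow> real) \<Rightarrow> bool" where
  "signing E \<pi> \<longleftrightarrow> (\<forall>i j. E i j \<longrightarrow> \<pi> i j = \<pi> j i \<and> (\<pi> i j = 1 \<or> \<pi> i j = -1))"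

definition signed_adj :: "('n::finite \<Rightarrow> 'n \<Rightarrow> bool) \<Rightarrow> ('n \<Rightarrow> 'n \<Rightarrow> real) \<Rightarrow> real^'n^'n" where
  "signed_adj E \<pi> = (\<chi> i j. if E i j then \<pi> i j else 0)"

definition adj :: "('n::finite \<Rightarrow> 'n \<Rightarrow> bool) \<Rightarrow> real^'n^'n" where
  "adj E = signed_adj E (\<lambda>_ _. 1)"

definition diag_mat :: "('n::finite \<Rightarrow> real) \<Rightarrow> real^'n^'n" where
  "diag_mat d = (\<chi> i j. if i = j then d i else 0)"

definition switching_equivalent :: "real^'n::finite^'n \<Rightarrow> real^'n^'n \<Rightarrow> bool" where
  "switching_equivalent A A' \<longleftrightarrow>
     (\<exists>d. (\<forall>i. d i = 1 \<or> d i = -1) \<and> A' = matrix_inv (diag_mat d) ** A ** diag_mat d)"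

definition balanced :: "('n::finite \<Rightarrow> 'n \<Rightarrow> bool) \<Rightarrow> ('n \<Rightarrow> 'n \<Rightarrow> real) \<Rightarrow> bool" where
  "balanced E \<pi> \<longleftrightarrow> switching_equivalent (adj E) (signed_adj E \<pi>)"

definition real_eigenvalues :: "real^'n::finite^'n \<Rightarrow> real set" where
  "real_eigenvalues A = {l. \<exists>v. v \<noteq> 0 \<and> A *v v = l *\<^sub>R v}"

text \<open>Largest eigenvalue lambda_1 (for symmetric matrices all eigenvalues are real).\<close>
definition lambda1 :: "real^'n::finite^'n \<Rightarrow> real" where
  "lambda1 A = Max (real_eigenvalues A)"

text \<open>Spectral radius of a symmetric real matrix: largest modulus of an eigenvalue
  (all eigenvalues of a symmetric real matrix are real).\<close>
definition sym_spectral_radius :: "real^'n::finite^'n \<Rightarrow> real" where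
  "sym_spectral_radius A = Max (abs ` real_eigenvalues A)"

end

theory Submission
  imports Defs
begin

text \<open>Let x be an eigenvector of A(G_\<pi>) for \<lambda>_1, so that the Rayleigh quotient of x is \<lambda>_1.
  If some edge ab has \<pi>(ab) x_a x_b < 0, deleting ab and passing to the vector \<bar>x\<bar> strictly
  increases the Rayleigh quotient. Otherwise x has a zero entry, since else sgn x would switch
  G_\<pi> to G_+. By connectivity some v with x_v = 0 has a neighbour u with x_u \<noteq> 0, and the
  eigenvalue equation at v forces a second neighbour w with x_w \<noteq> 0. Deleting vw and moving a
  little mass onto v, the vector \<bar>x\<bar> + t e_v has Rayleigh quotient above \<lambda>_1. In both cases the
  largest eigenvalue of the proper subgraph, and hence its spectral radius, exceeds \<lambda>_1.\<close>

lemma inner_matrix_vector_mult_eq_sum: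
  fixes M :: "real^'n::finite^'n"
  shows "x \<bullet> (M *v y) = (\<Sum>i\<in>UNIV. \<Sum>j\<in>UNIV. M$i$j * x$i * y$j)"
  by (simp add: inner_vec_def matrix_vector_mult_def sum_distrib_left mult_ac)

lemma inner_symmetric_matrix_commute:
  fixes M :: "real^'n::finite^'n"
  assumes "transpose M = M"
  shows "u \<bullet> (M *v w) = w \<bullet> (M *v u)"
  by (metis assms dot_lmul_matrix inner_commute transpose_matrix_vector)

lemma linear_coeff_eq_0_if_quadratic_nonpos:
  fixes c K :: real
  assumes "\<And>t. 2*t*c + t^2*K \<le> 0"
  shows "c = 0"
proof (rule ccontr)
  assume c: "c \<noteq> 0"
  define q where "q = \<bar>K\<bar> + 1"
  have q: "q > 0" "2*q + K > 0" unfolding q_def by auto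
  have "2*(c/q)*c + (c/q)^2*K = c^2/q^2 * (2*q + K)"
    using q by (simp add: field_simps power2_eq_square)
  moreover have "c^2/q^2 * (2*q + K) > 0" using q c by simp
  ultimately show False using assms[of "c/q"] by linarith
qed

text \<open>The maximum of the Rayleigh quotient on the unit sphere is attained, and its first variation
  vanishes at a maximiser, which is therefore an eigenvector.\<close>
lemma symmetric_matrix_max_eigenvector:
  fixes M :: "real^'n::finite^'n"
  assumes sym: "transpose M = M"
  obtains v \<mu> where "v \<noteq> 0" "M *v v = \<mu> *\<^sub>R v" "\<And>u. u \<bullet> (M *v u) \<le> \<mu> * (u \<bullet> u)"
proof -
  let ?f = "\<lambda>u. u \<bullet> (M *v u)"
  have cont: "continuous_on (sphere 0 1) ?f"
    by (intro continuous_intros)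
  have ne: "sphere (0::real^'n) 1 \<noteq> {}"
    using norm_axis_1[of undefined] by (metis mem_sphere_0 empty_iff)
  obtain v where v: "v \<in> sphere 0 1" and vmax: "\<And>y. y \<in> sphere 0 1 \<Longrightarrow> ?f y \<le> ?f v"
    using continuous_attains_sup[OF compact_sphere ne cont] by blast
  define \<mu> where "\<mu> = ?f v"
  have vv: "v \<bullet> v = 1" using v by (simp add: dot_square_norm)
  have bound: "?f u \<le> \<mu> * (u \<bullet> u)" for u
  proof (cases "u = 0")
    case False
    define w where "w = (1/norm u) *\<^sub>R u"
    have "w \<in> sphere 0 1" using False by (simp add: w_def)
    hence "?f w \<le> \<mu>" using vmax \<mu>_def by blast
    moreover have "?f w = ?f u / (norm u)^2"
      by (simp add: w_def matrix_vector_mult_scaleR power2_eq_square)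
    moreover have "u \<bullet> u = (norm u)^2" by (simp add: dot_square_norm)
    ultimately show ?thesis using False by (simp add: divide_le_eq mult.commute)
  qed simp
  have orth: "w \<bullet> (M *v v - \<mu> *\<^sub>R v) = 0" for w
  proof (rule linear_coeff_eq_0_if_quadratic_nonpos)
    fix t :: real
    have "?f (v + t *\<^sub>R w) = \<mu> + 2*t*(w \<bullet> (M *v v)) + t^2 * ?f w"
      using inner_symmetric_matrix_commute[OF sym, of v w]
      by (simp add: \<mu>_def matrix_vector_right_distrib matrix_vector_mult_scaleR
          inner_add_left inner_add_right power2_eq_square algebra_simps)
    moreover have "(v + t *\<^sub>R w) \<bullet> (v + t *\<^sub>R w) = 1 + 2*t*(w \<bullet> v) + t^2*(w \<bullet> w)"
      using vv by (simp add: inner_add_left inner_add_right inner_commute power2_eq_square algebra_simps)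
    ultimately have "\<mu> + 2*t*(w \<bullet> (M *v v)) + t^2 * ?f w \<le> \<mu> * (1 + 2*t*(w \<bullet> v) + t^2*(w \<bullet> w))"
      using bound[of "v + t *\<^sub>R w"] by simp
    then show "2*t*(w \<bullet> (M *v v - \<mu> *\<^sub>R v)) + t^2*(?f w - \<mu> * (w \<bullet> w)) \<le> 0"
      by (simp add: inner_diff_right algebra_simps)
  qed
  have "M *v v = \<mu> *\<^sub>R v"
    using orth[of "M *v v - \<mu> *\<^sub>R v"] by simp
  moreover have "v \<noteq> 0" using vv by auto
  ultimately show thesis using bound that by blast
qed

text \<open>Eigenvectors of distinct eigenvalues are orthogonal, hence there are at most
  CARD('n) eigenvalues.\<close>
lemma finite_real_eigenvalues_symmetric:
  fixes M :: "real^'n::finite^'n"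
  assumes sym: "transpose M = M"
  shows "finite (real_eigenvalues M)"
proof -
  let ?S = "real_eigenvalues M"
  obtain ev where ev: "\<And>l. l \<in> ?S \<Longrightarrow> ev l \<noteq> 0 \<and> M *v ev l = l *\<^sub>R ev l"
    using bchoice[of ?S "\<lambda>l v. v \<noteq> 0 \<and> M *v v = l *\<^sub>R v"] by (auto simp: real_eigenvalues_def)
  have eq: "l = m" if "l \<in> ?S" "m \<in> ?S" "ev l \<bullet> ev m \<noteq> 0" for l m
  proof -
    have "l * (ev l \<bullet> ev m) = ev m \<bullet> (M *v ev l)" using ev[OF that(1)] by (simp add: inner_commute)
    also have "\<dots> = ev l \<bullet> (M *v ev m)" by (rule inner_symmetric_matrix_commute[OF sym])
    also have "\<dots> = m * (ev l \<bullet> ev m)" using ev[OF that(2)] by simp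
    finally show "l = m" using that(3) by simp
  qed
  have inj: "inj_on ev ?S"
    by (rule inj_onI) (use ev eq in fastforce)
  have "pairwise orthogonal (ev ` ?S)"
    using eq by (auto simp: pairwise_def orthogonal_def)
  moreover have "0 \<notin> ev ` ?S" using ev by force
  ultimately have "independent (ev ` ?S)" using pairwise_orthogonal_independent by blast
  then show ?thesis using independent_imp_finite finite_imageD inj by blast
qed

lemma lambda1_eigenvector:
  fixes M :: "real^'n::finite^'n"
  assumes sym: "transpose M = M"
  obtains x where "x \<noteq> 0" "M *v x = lambda1 M *\<^sub>R x"
proof -
  obtain v \<mu> where v: "v \<noteq> 0" "M *v v = \<mu> *\<^sub>R v" and bound: "\<And>u. u \<bullet> (M *v u) \<le> \<mu> * (u \<bullet> u)"
    using symmetric_matrix_max_eigenvector[OF sym] by blast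
  have "l \<le> \<mu>" if l: "l \<in> real_eigenvalues M" for l
  proof -
    obtain w where "w \<noteq> 0" "M *v w = l *\<^sub>R w" using l by (auto simp: real_eigenvalues_def)
    then show "l \<le> \<mu>" using bound[of w] by simp
  qed
  moreover have "\<mu> \<in> real_eigenvalues M" using v by (auto simp: real_eigenvalues_def)
  ultimately have "lambda1 M = \<mu>"
    unfolding lambda1_def by (intro Max_eqI finite_real_eigenvalues_symmetric[OF sym])
  with v that show thesis by simp
qed

lemma less_sym_spectral_radius_if_rayleigh:
  fixes M :: "real^'n::finite^'n"
  assumes sym: "transpose M = M" and less: "L * (z \<bullet> z) < z \<bullet> (M *v z)"
  shows "L < sym_spectral_radius M"
proof -
  obtain v \<mu> where v: "v \<noteq> 0" "M *v v = \<mu> *\<^sub>R v" and bound: "\<And>u. u \<bullet> (M *v u) \<le> \<mu> * (u \<bullet> u)"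
    using symmetric_matrix_max_eigenvector[OF sym] by blast
  have "L * (z \<bullet> z) < \<mu> * (z \<bullet> z)" using less bound[of z] by linarith
  then have "L < \<mu>" by (metis inner_ge_zero mult_right_mono not_less)
  also have "\<mu> \<le> \<bar>\<mu>\<bar>" by simp
  also have "\<dots> \<le> sym_spectral_radius M"
    unfolding sym_spectral_radius_def using v finite_real_eigenvalues_symmetric[OF sym]
    by (intro Max_ge) (auto simp: real_eigenvalues_def)
  finally show ?thesis .
qed

definition delete_edge :: "('n \<Rightarrow> 'n \<Rightarrow> bool) \<Rightarrow> 'n \<Rightarrow> 'n \<Rightarrow> 'n \<Rightarrow> 'n \<Rightarrow> bool" where
  "delete_edge E a b = (\<lambda>i j. E i j \<and> {i, j} \<noteq> {a, b})"

lemma simple_graph_delete_edge: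
  "simple_graph E \<Longrightarrow> simple_graph (delete_edge E a b)"
  by (auto simp: simple_graph_def delete_edge_def symp_def irreflp_def insert_commute)

lemma delete_edge_le: "delete_edge E a b \<le> E"
  by (simp add: delete_edge_def le_fun_def)

lemma delete_edge_less: "E a b \<Longrightarrow> delete_edge E a b < E"
  by (auto simp: delete_edge_def less_fun_def le_fun_def)

lemma signed_adj_nth [simp]: "signed_adj E \<pi> $ i $ j = (if E i j then \<pi> i j else 0)"
  by (simp add: signed_adj_def)

lemma adj_nth [simp]: "adj E $ i $ j = (if E i j then 1 else 0)"
  by (simp add: adj_def)

lemma transpose_signed_adj:
  "symp E \<Longrightarrow> signing E \<pi> \<Longrightarrow> transpose (signed_adj E \<pi>) = signed_adj E \<pi>"
  by (auto simp: vec_eq_iff transpose_def signing_def dest: sympD)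

lemma transpose_adj: "symp E \<Longrightarrow> transpose (adj E) = adj E"
  unfolding adj_def by (rule transpose_signed_adj) (simp_all add: signing_def)

lemma matrix_inv_involution:
  fixes A :: "'a::semiring_1^'n::finite^'n"
  assumes "A ** A = mat 1"
  shows "matrix_inv A = A"
proof -
  have inv: "A ** matrix_inv A = mat 1 \<and> matrix_inv A ** A = mat 1"
    unfolding matrix_inv_def by (rule someI[of _ A]) (simp add: assms)
  have "matrix_inv A = matrix_inv A ** (A ** A)"
    by (simp add: assms matrix_mul_rid)
  also have "\<dots> = A"
    by (simp add: inv matrix_mul_assoc matrix_mul_lid)
  finally show ?thesis .
qed

lemma diag_mat_nth: "diag_mat d $ i $ j = (if i = j then d i else 0)"
  by (simp add: diag_mat_def)

lemma diag_mat_mult_nth: "(diag_mat d ** A) $ i $ j = d i * A $ i $ j"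
proof -
  have "(diag_mat d ** A) $ i $ j = (\<Sum>k\<in>UNIV. (if i = k then d i else 0) * A $ k $ j)"
    by (simp add: matrix_matrix_mult_def diag_mat_def)
  also have "\<dots> = (\<Sum>k\<in>UNIV. if k = i then d i * A $ k $ j else 0)"
    by (rule sum.cong) auto
  finally show ?thesis by simp
qed

lemma mult_diag_mat_nth: "(A ** diag_mat d) $ i $ j = A $ i $ j * d j"
proof -
  have "(A ** diag_mat d) $ i $ j = (\<Sum>k\<in>UNIV. A $ i $ k * (if k = j then d k else 0))"
    by (simp add: matrix_matrix_mult_def diag_mat_def)
  also have "\<dots> = (\<Sum>k\<in>UNIV. if k = j then A $ i $ k * d j else 0)"
    by (rule sum.cong) auto
  finally show ?thesis by simp
qed

lemma balanced_if_product_signing: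
  assumes d: "\<And>i. d i = 1 \<or> d i = -1" and \<pi>: "\<And>i j. E i j \<Longrightarrow> \<pi> i j = d i * d j"
  shows "balanced E \<pi>"
proof -
  have "d i * d i = 1" for i
    using d[of i] by auto
  then have "diag_mat d ** diag_mat d = mat 1"
    by (auto simp: vec_eq_iff diag_mat_mult_nth diag_mat_nth mat_def)
  then have "matrix_inv (diag_mat d) ** adj E ** diag_mat d = signed_adj E \<pi>"
    using \<pi> by (simp add: matrix_inv_involution vec_eq_iff diag_mat_mult_nth mult_diag_mat_nth)
  then show ?thesis
    unfolding balanced_def switching_equivalent_def using d by metis
qed

lemma balanced_if_nonneg_on_edges:
  assumes "signing E \<pi>" and "\<And>i. f i \<noteq> 0" and "\<And>i j. E i j \<Longrightarrow> 0 \<le> \<pi> i j * f i * f j"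
  shows "balanced E \<pi>"
proof (rule balanced_if_product_signing)
  show "sgn (f i) = 1 \<or> sgn (f i) = -1" for i
    using assms(2) by (auto simp: sgn_if)
  show "\<pi> i j = sgn (f i) * sgn (f j)" if "E i j" for i j
  proof -
    have "\<pi> i j = 1 \<or> \<pi> i j = -1" using assms(1) that by (simp add: signing_def)
    moreover have "0 \<le> \<pi> i j * (f i * f j)" using assms(3)[OF that] by (simp add: mult.assoc)
    ultimately show ?thesis
      using assms(2)[of i] assms(2)[of j] by (auto simp: sgn_if zero_le_mult_iff mult_le_0_iff)
  qed
qed

lemma inner_abs_abs: "\<bar>x\<bar> \<bullet> \<bar>x\<bar> = x \<bullet> (x :: real^'n::finite)"
  by (simp add: inner_vec_def abs_vec_def)

lemma signed_adj_term_le_adj_abs_term: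
  assumes "signing E \<pi>" and "H \<le> E" and "E i j \<Longrightarrow> \<not> H i j \<Longrightarrow> \<pi> i j * x$i * x$j \<le> 0"
  shows "signed_adj E \<pi> $ i $ j * x$i * x$j \<le> adj H $ i $ j * \<bar>x\<bar>$i * \<bar>x\<bar>$j"
proof (cases "H i j")
  case True
  then have "E i j" using assms(2) by (auto simp: le_fun_def)
  then have "\<pi> i j = 1 \<or> \<pi> i j = -1" using assms(1) by (simp add: signing_def)
  then have "\<bar>\<pi> i j\<bar> = 1" by auto
  then have "\<pi> i j * x$i * x$j \<le> \<bar>x$i\<bar> * \<bar>x$j\<bar>"
    by (metis abs_ge_self abs_mult mult.assoc mult_1)
  then show ?thesis using True \<open>E i j\<close> by (simp add: abs_vec_def)
qed (use assms(3) in auto)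

lemma inner_signed_adj_le_inner_adj_abs:
  assumes "signing E \<pi>" and "H \<le> E" and "\<And>i j. E i j \<Longrightarrow> \<not> H i j \<Longrightarrow> \<pi> i j * x$i * x$j \<le> 0"
  shows "x \<bullet> (signed_adj E \<pi> *v x) \<le> \<bar>x\<bar> \<bullet> (adj H *v \<bar>x\<bar>)"
  unfolding inner_matrix_vector_mult_eq_sum
  by (intro sum_mono signed_adj_term_le_adj_abs_term[OF assms(1,2)] assms(3))

lemma inner_signed_adj_less_delete_negative_edge:
  assumes "symp E" and "signing E \<pi>" and "E a b" and "\<pi> a b * x$a * x$b < 0"
  shows "x \<bullet> (signed_adj E \<pi> *v x) < \<bar>x\<bar> \<bullet> (adj (delete_edge E a b) *v \<bar>x\<bar>)"
proof -
  let ?H = "delete_edge E a b"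
  have "\<pi> i j * x$i * x$j = \<pi> a b * x$a * x$b" if "E i j" "\<not> ?H i j" for i j
    using that assms(2,3) by (auto simp: delete_edge_def doubleton_eq_iff signing_def mult_ac)
  then have term_le: "signed_adj E \<pi> $ i $ j * x$i * x$j \<le> adj ?H $ i $ j * \<bar>x\<bar>$i * \<bar>x\<bar>$j" for i j
    using assms(4) by (intro signed_adj_term_le_adj_abs_term[OF assms(2) delete_edge_le]) auto
  have term_less: "signed_adj E \<pi> $ a $ b * x$a * x$b < adj ?H $ a $ b * \<bar>x\<bar>$a * \<bar>x\<bar>$b"
    using assms(3,4) by (simp add: delete_edge_def)
  have row_less: "(\<Sum>j\<in>UNIV. signed_adj E \<pi> $ a $ j * x$a * x$j)
      < (\<Sum>j\<in>UNIV. adj ?H $ a $ j * \<bar>x\<bar>$a * \<bar>x\<bar>$j)"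
    by (intro sum_strict_mono_ex1 ballI bexI[of _ b] term_le term_less) simp_all
  show ?thesis
    unfolding inner_matrix_vector_mult_eq_sum
    by (intro sum_strict_mono_ex1[OF finite] ballI sum_mono term_le) (use row_less in blast)
qed

lemma inner_symmetric_matrix_add_axis:
  fixes N :: "real^'n::finite^'n"
  assumes "transpose N = N"
  shows "(y + t *\<^sub>R axis v 1) \<bullet> (N *v (y + t *\<^sub>R axis v 1))
           = y \<bullet> (N *v y) + 2 * t * (N *v y) $ v + t\<^sup>2 * N $ v $ v"
proof -
  have "y \<bullet> (N *v axis v 1) = (N *v y) $ v"
    using inner_symmetric_matrix_commute[OF assms] by (metis inner_axis' inner_real_def mult_1)
  moreover have "axis v 1 \<bullet> (N *v axis v 1) = N $ v $ v"
    by (simp add: inner_axis' matrix_vector_mul_component inner_axis)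
  ultimately show ?thesis
    by (simp add: matrix_vector_right_distrib matrix_vector_mult_scaleR inner_add_left
        inner_add_right inner_axis' power2_eq_square algebra_simps)
qed

lemma matrix_vector_mult_nth_ge_term:
  fixes N :: "real^'n::finite^'n"
  assumes "\<And>i j. 0 \<le> N $ i $ j" and "\<And>j. 0 \<le> y $ j"
  shows "N $ v $ u * y $ u \<le> (N *v y) $ v"
  unfolding matrix_vector_mult_def by (simp, rule member_le_sum) (simp_all add: assms)

lemma rayleigh_delete_edge_at_zero:
  fixes x :: "real^'n::finite"
  assumes sg: "simple_graph E" and sig: "signing E \<pi>"
    and edges: "E v u" "E v w" "u \<noteq> w" and x: "x$v = 0" "x$u \<noteq> 0"
    and rq: "x \<bullet> (signed_adj E \<pi> *v x) = \<mu> * (x \<bullet> x)"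
  obtains z where "\<mu> * (z \<bullet> z) < z \<bullet> (adj (delete_edge E v w) *v z)"
proof -
  let ?N = "adj (delete_edge E v w)"
  define c where "c = \<bar>x$u\<bar>"
  define t where "t = c / (\<bar>\<mu>\<bar> + 1)"
  define z where "z = \<bar>x\<bar> + t *\<^sub>R axis v 1"
  have c_pos: "c > 0" using x by (simp add: c_def)
  have t_bounds: "t > 0" "\<mu> * t < 2 * c"
  proof -
    show "t > 0" using c_pos by (simp add: t_def)
    have "\<mu> * t \<le> \<bar>\<mu>\<bar> * t" using \<open>t > 0\<close> by (simp add: mult_right_mono)
    also have "\<dots> < c" using c_pos by (simp add: t_def field_simps)
    finally show "\<mu> * t < 2 * c" using c_pos by linarith
  qed
  have symN: "transpose ?N = ?N"
    using simple_graph_delete_edge[OF sg] by (simp add: transpose_adj simple_graph_def)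
  have "c \<le> (?N *v \<bar>x\<bar>) $ v"
    using matrix_vector_mult_nth_ge_term[of ?N "\<bar>x\<bar>" v u] edges
    by (simp add: c_def abs_vec_def delete_edge_def doubleton_eq_iff)
  then have "2 * t * c \<le> 2 * t * (?N *v \<bar>x\<bar>) $ v"
    using t_bounds(1) by simp
  moreover have "\<mu> * (x \<bullet> x) \<le> \<bar>x\<bar> \<bullet> (?N *v \<bar>x\<bar>)"
    unfolding rq[symmetric] using sig delete_edge_le x(1)
    by (intro inner_signed_adj_le_inner_adj_abs) (auto simp: delete_edge_def doubleton_eq_iff)
  moreover have "z \<bullet> (?N *v z) = \<bar>x\<bar> \<bullet> (?N *v \<bar>x\<bar>) + 2 * t * (?N *v \<bar>x\<bar>) $ v + t\<^sup>2 * ?N $ v $ v"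
    unfolding z_def by (rule inner_symmetric_matrix_add_axis[OF symN])
  moreover have "0 \<le> t\<^sup>2 * ?N $ v $ v"
    by simp
  moreover have "\<mu> * (z \<bullet> z) = \<mu> * (x \<bullet> x) + \<mu> * t\<^sup>2"
  proof -
    have "\<bar>x\<bar> $ v = 0" using x(1) by (simp add: abs_vec_def)
    then show ?thesis
      by (simp add: z_def inner_add_left inner_add_right inner_axis inner_axis'
          inner_axis_axis inner_abs_abs power2_eq_square distrib_left)
  qed
  moreover have "\<mu> * t\<^sup>2 < 2 * t * c"
    using t_bounds by (simp add: power2_eq_square mult_strict_left_mono)
  ultimately have "\<mu> * (z \<bullet> z) < z \<bullet> (?N *v z)"
    by linarith
  then show thesis by (rule that)
qed

lemma rtranclp_exists_crossing_step:
  assumes "R\<^sup>*\<^sup>* p q" and "P p" and "\<not> P q"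
  shows "\<exists>u v. R u v \<and> P u \<and> \<not> P v"
  using assms by (induction rule: rtranclp_induct) blast+

lemma eigenvector_zero_entry_other_neighbour:
  assumes "signing E \<pi>" and "signed_adj E \<pi> *v x = \<mu> *\<^sub>R x"
    and "x$v = 0" and "E v u" and "x$u \<noteq> 0"
  shows "\<exists>w. E v w \<and> w \<noteq> u \<and> x$w \<noteq> 0"
proof (rule ccontr)
  assume "\<nexists>w. E v w \<and> w \<noteq> u \<and> x$w \<noteq> 0"
  then have "(\<Sum>j\<in>UNIV - {u}. signed_adj E \<pi> $ v $ j * x$j) = 0"
    by (intro sum.neutral) auto
  then have "(signed_adj E \<pi> *v x) $ v = \<pi> v u * x$u"
    using assms(4) by (simp add: matrix_vector_mult_def sum.remove[of UNIV u])
  moreover have "\<pi> v u \<noteq> 0" using assms(1,4) by (force simp: signing_def)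
  ultimately show False using assms(2,3,5) by simp
qed

lemma exists_edge_deletion_raising_rayleigh:
  assumes sg: "simple_graph E" and conn: "connected_graph E"
    and sig: "signing E \<pi>" and unbalanced: "\<not> balanced E \<pi>"
    and x: "x \<noteq> 0" "signed_adj E \<pi> *v x = \<mu> *\<^sub>R x"
  shows "\<exists>a b z. E a b \<and> \<mu> * (z \<bullet> z) < z \<bullet> (adj (delete_edge E a b) *v z)"
proof -
  have "symp E" using sg by (simp add: simple_graph_def)
  have rq: "x \<bullet> (signed_adj E \<pi> *v x) = \<mu> * (x \<bullet> x)" using x(2) by simp
  show ?thesis
  proof (cases "\<exists>a b. E a b \<and> \<pi> a b * x$a * x$b < 0")
    case True
    then obtain a b where "E a b" "\<pi> a b * x$a * x$b < 0" by blast
    then show ?thesis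
      using inner_signed_adj_less_delete_negative_edge[OF \<open>symp E\<close> sig] rq
      by (metis inner_abs_abs)
  next
    case False
    have "\<exists>v. x$v = 0"
      using balanced_if_nonneg_on_edges[OF sig, of "\<lambda>i. x$i"] False unbalanced by force
    then obtain u v where uv: "E u v" "x$u \<noteq> 0" "x$v = 0"
      using rtranclp_exists_crossing_step[of E _ _ "\<lambda>i. x$i \<noteq> 0"] conn x(1)
      by (metis connected_graph_def vec_eq_iff zero_index)
    then obtain w where "E v w" "w \<noteq> u" "x$w \<noteq> 0"
      using eigenvector_zero_entry_other_neighbour[OF sig x(2)] \<open>symp E\<close> by (metis sympD)
    then show ?thesis
      using rayleigh_delete_edge_at_zero[OF sg sig _ _ _ uv(3,2) rq] uv(1) \<open>symp E\<close>
      by (metis sympD)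
  qed
qed

theorem mainTheorem1:
  fixes E :: "'n::finite \<Rightarrow> 'n \<Rightarrow> bool" and \<pi> :: "'n \<Rightarrow> 'n \<Rightarrow> real"
  assumes "simple_graph E" and "connected_graph E"
    and "signing E \<pi>" and "\<not> balanced E \<pi>"
  shows "\<exists>H :: 'n \<Rightarrow> 'n \<Rightarrow> bool. simple_graph H \<and> H < E \<and>
           lambda1 (signed_adj E \<pi>) < sym_spectral_radius (adj H)"
proof -
  have "transpose (signed_adj E \<pi>) = signed_adj E \<pi>"
    using assms(1,3) by (simp add: transpose_signed_adj simple_graph_def)
  then obtain x where "x \<noteq> 0" "signed_adj E \<pi> *v x = lambda1 (signed_adj E \<pi>) *\<^sub>R x"
    by (rule lambda1_eigenvector)
  then obtain a b z where "E a b"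
    and "lambda1 (signed_adj E \<pi>) * (z \<bullet> z) < z \<bullet> (adj (delete_edge E a b) *v z)"
    using exists_edge_deletion_raising_rayleigh[OF assms] by blast
  moreover have "simple_graph (delete_edge E a b)"
    using assms(1) by (rule simple_graph_delete_edge)
  ultimately show ?thesis
    by (metis delete_edge_less less_sym_spectral_radius_if_rayleigh simple_graph_def transpose_adj)
qed

end
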